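(* Let $\mathcal U$ be an update family and let $u^*\in\mathcal S$ be a rational direction with $\alpha^-(u^* )=\infty$. Then there exists $u_0\in S^1\setminus\{u^*\}$ such that the closed arc $[u_0,u^*]$ (the short arc between them) is contained in $\mathcal S$, $\alpha^-(u)=\infty$ for all rational $u\in[u_0,u^*]$, and for every $u\in[u_0,u^*]$ and all $a,b\in\mathbb Z^2$ for which $$J=\big(\mathbb H_{u_0}(a)\cap\mathbb H_{u^*}(b)\big)\setminus\mathbb H_u$$ is non-empty, the set $\mathbb H_u\cup J$ is closed, i.e. $[\mathbb H_u\cup J]=\mathbb H_u\cup J$.
   Context: Update family $\mathcal U$: finite collection of finite subsets of $\mathbb Z^2\setminus\{0\}$; $A_{t+1}=A_t\cup\{x:x+X\subset A_t,\ X\in\mathcal U\}$, $[A]=\bigcup_tA_t$. $\mathbb H_u(a)=\{x\in\mathbb Z^2:\langle x-a,u\rangle<0\}$, $\mathbb H_u=\mathbb H_u(0)$; $u$ stable if $[\mathbb H_u]=\mathbb H_u$, $\mathcal S$ the stable set. For rational $u$ (rational or infinite slope), $\ell_u^-$ is the origin together with the sites of $\{x:\langle x,u\rangle=0\}$ to the left of the origin looking in direction $u$, and $\alpha^-(u)$ is the minimal cardinality of $Z\subset\mathbb Z^2$ such that $[\mathbb H_u\cup Z]$ contains infinitely many sites of $\ell_u^-$ ($\infty$ if none exists). A set of the form $J$ above is called a $u$-iceberg. *)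

theory Defs
  imports Main "HOL-Library.Extended_Nat"
begin

type_synonym site = "int \<times> int"
type_synonym dir = "real \<times> real"

definition sadd :: "site \<Rightarrow> site \<Rightarrow> site" where
  "sadd x y = (fst x + fst y, snd x + snd y)"

definition update_family :: "site set set \<Rightarrow> bool" where
  "update_family U \<longleftrightarrow> finite U \<and> (\<forall>X\<in>U. finite X \<and> (0,0) \<notin> X)"

definition upd_step :: "site set set \<Rightarrow> site set \<Rightarrow> site set" where
  "upd_step U A = A \<union> {x. \<exists>X\<in>U. sadd x ` X \<subseteq> A}"

definition span :: "site set set \<Rightarrow> site set \<Rightarrow> site set" where
  "span U A = (\<Union>t. (upd_step U ^^ t) A)"

definition S1 :: "dir set" where
  "S1 = {u. (fst u)\<^sup>2 + (snd u)\<^sup>2 = 1}"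

definition ip :: "site \<Rightarrow> dir \<Rightarrow> real" where
  "ip x u = of_int (fst x) * fst u + of_int (snd x) * snd u"

definition halfplane :: "dir \<Rightarrow> site \<Rightarrow> site set" where
  "halfplane u a = {x. ip (fst x - fst a, snd x - snd a) u < 0}"

definition stable_set :: "site set set \<Rightarrow> dir set" where
  "stable_set U = {u \<in> S1. span U (halfplane u (0,0)) = halfplane u (0,0)}"

definition rational_dir :: "dir \<Rightarrow> bool" where
  "rational_dir u \<longleftrightarrow> u \<in> S1 \<and> (fst u = 0 \<or> snd u / fst u \<in> \<rat>)"

text \<open>ell_u^-: origin together with the sites on the line <x,u> = 0 lying to the left
  of the origin when looking in direction u (left = rotation of u by +90 degrees,
  i.e. the vector (- snd u, fst u)).\<close>
definition ell_minus :: "dir \<Rightarrow> site set" where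
  "ell_minus u = {x. ip x u = 0 \<and> ip x (- snd u, fst u) \<ge> 0}"

text \<open>alpha^-(u): minimal size of a (finite) Z with [H_u \<union> Z] containing infinitely
  many sites of ell_u^-; infinity if no such Z exists (Inf of the empty set).\<close>
definition alpha_minus :: "site set set \<Rightarrow> dir \<Rightarrow> enat" where
  "alpha_minus U u = (INF Z \<in> {Z. finite Z \<and> infinite (span U (halfplane u (0,0) \<union> Z) \<inter> ell_minus u)}.
      enat (card Z))"

text \<open>Closed short arc between two non-antipodal unit vectors.\<close>
definition arc :: "dir \<Rightarrow> dir \<Rightarrow> dir set" where
  "arc v w = {u \<in> S1. \<exists>s t. s \<ge> 0 \<and> t \<ge> 0 \<and> u = (s * fst v + t * fst w, s * snd v + t * snd w)}"

end

theory Submission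
  imports Defs Complex_Main
begin

(* Write F(x) = <x,ustar> and G(x) = <x, perp ustar>, where perp rotates by +90 degrees.
   (1) alpha^-(ustar) = infinity forces every rule X of U to contain a site y with F(y) > 0, or with
       F(y) = 0 and G(y) > 0: otherwise X would let H_{ustar} plus a finite segment of the line
       <x,ustar> = 0 infect the whole half-line ell_{ustar}^-, which is infinite since ustar is rational.
   (2) Since U is finite, there is kappa > 0 such that these sites are nonnegative on the whole
       cone C of directions between ustar and a direction at slope kappa towards perp ustar.
   (3) If every rule has a site nonnegative on C, then every union of intersections of
       half-planes with normals in C is closed, because no site outside it can ever see a
       rule inside it.  This gives stability of the arc and closedness of the icebergs.
   (4) Choosing u0 inside the half-cone C', every direction v != ustar of the arc [u0,ustar] satisfies
       alpha^-(v) = infinity: any finite Z only reaches the closed union of H_v and H_w(a)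
       (w the steepest direction of C), which contains finitely many sites of ell_v^-. *)

lemma subset_span: "A \<subseteq> span U A"
  unfolding span_def by (metis UNIV_I UN_upper funpow_0)

lemma span_mono:
  assumes "A \<subseteq> B"
  shows "span U A \<subseteq> span U B"
proof -
  have "(upd_step U ^^ t) A \<subseteq> (upd_step U ^^ t) B" for t
  proof (induction t)
    case 0
    then show ?case using assms by simp
  next
    case (Suc t)
    then show ?case by (auto simp: upd_step_def)
  qed
  then show ?thesis unfolding span_def by blast
qed

lemma span_rule:
  assumes "finite X" "X \<in> U" "sadd x ` X \<subseteq> span U A"
  shows "x \<in> span U A"
proof -
  have mono: "(upd_step U ^^ m) A \<subseteq> (upd_step U ^^ n) A" if "m \<le> n" for m n
    by (rule lift_Suc_mono_le[of "\<lambda>t. (upd_step U ^^ t) A", OF _ that]) (auto simp: upd_step_def)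
  have "\<forall>y\<in>X. \<exists>t. sadd x y \<in> (upd_step U ^^ t) A"
    using assms(3) unfolding span_def by blast
  then obtain time where time: "\<forall>y\<in>X. sadd x y \<in> (upd_step U ^^ time y) A" by metis
  define T where "T = Max (time ` X)"
  have "sadd x y \<in> (upd_step U ^^ T) A" if "y \<in> X" for y
    using time that mono[of "time y" T] assms(1) by (auto simp: T_def)
  then have "sadd x ` X \<subseteq> (upd_step U ^^ T) A" by blast
  then have "x \<in> (upd_step U ^^ Suc T) A" using assms(2) by (auto simp: upd_step_def)
  then show ?thesis unfolding span_def by blast
qed

definition dot :: "dir \<Rightarrow> dir \<Rightarrow> real" where
  "dot z v = fst z * fst v + snd z * snd v"

definition perp :: "dir \<Rightarrow> dir" where
  "perp u = (- snd u, fst u)"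

definition comb :: "real \<Rightarrow> dir \<Rightarrow> real \<Rightarrow> dir \<Rightarrow> dir" where
  "comb s v t w = (s * fst v + t * fst w, s * snd v + t * snd w)"

definition real_site :: "site \<Rightarrow> dir" where
  "real_site x = (of_int (fst x), of_int (snd x))"

lemma ip_eq_dot: "ip x v = dot (real_site x) v"
  by (simp add: ip_def dot_def real_site_def)

lemma ip_sadd: "ip (sadd x y) v = ip x v + ip y v"
  by (simp add: ip_def sadd_def algebra_simps)

lemma ip_origin [simp]: "ip (0,0) v = 0"
  by (simp add: ip_def)

lemma mem_halfplane: "x \<in> halfplane u a \<longleftrightarrow> ip x u < ip a u"
  by (simp add: halfplane_def ip_def algebra_simps)

lemma dot_comb: "dot (comb s v t w) z = s * dot v z + t * dot w z"
  by (simp add: dot_def comb_def algebra_simps)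

lemma dot_commute: "dot z v = dot v z"
  by (simp add: dot_def algebra_simps)

lemma dot_perp_perp: "dot (perp z) (perp v) = dot z v"
  by (simp add: dot_def perp_def)

lemma dot_perp_left: "dot (perp z) v = - dot z (perp v)"
  by (simp add: dot_def perp_def algebra_simps)

lemma dot_perp_self: "dot z (perp z) = 0"
  by (simp add: dot_def perp_def algebra_simps)

lemma S1_iff_dot: "u \<in> S1 \<longleftrightarrow> dot u u = 1"
  by (simp add: S1_def dot_def power2_eq_square)

lemma orthonormal_frame:
  assumes "u \<in> S1"
  shows "dot u u = 1" "dot u (perp u) = 0" "dot (perp u) u = 0" "dot (perp u) (perp u) = 1"
  using assms by (simp_all only: S1_iff_dot dot_perp_perp) (simp_all add: dot_perp_left dot_perp_self)

lemma ell_minus_eq: "ell_minus u = {x. ip x u = 0 \<and> 0 \<le> ip x (perp u)}"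
  by (simp add: ell_minus_def perp_def)

lemma arc_eq: "arc v w = {u \<in> S1. \<exists>s t. 0 \<le> s \<and> 0 \<le> t \<and> u = comb s v t w}"
  by (auto simp: arc_def comb_def)

lemma dot_decomp:
  assumes "u \<in> S1"
  shows "dot z v = dot z u * dot v u + dot z (perp u) * dot v (perp u)"
proof -
  have "dot z u * dot v u + dot z (perp u) * dot v (perp u) = dot u u * dot z v"
    by (simp add: dot_def perp_def algebra_simps)
  then show ?thesis using assms by (simp add: S1_iff_dot)
qed

lemma coord_decomp:
  assumes "u \<in> S1"
  shows "fst z = dot z u * fst u - dot z (perp u) * snd u"
    and "snd z = dot z u * snd u + dot z (perp u) * fst u"
  using dot_decomp[OF assms, of z "(1,0)"] dot_decomp[OF assms, of z "(0,1)"]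
  by (simp_all add: dot_def perp_def)

lemma S1_coord_bound:
  assumes "u \<in> S1"
  shows "\<bar>fst u\<bar> \<le> 1" "\<bar>snd u\<bar> \<le> 1"
proof -
  have "(fst u)\<^sup>2 + (snd u)\<^sup>2 = 1" using assms by (simp add: S1_def)
  then have "(fst u)\<^sup>2 \<le> 1" "(snd u)\<^sup>2 \<le> 1"
    using zero_le_power2[of "fst u"] zero_le_power2[of "snd u"] by linarith+
  then show "\<bar>fst u\<bar> \<le> 1" "\<bar>snd u\<bar> \<le> 1" by (simp_all add: abs_square_le_1)
qed

lemma bounded_sites_finite:
  assumes "\<And>x. x \<in> S \<Longrightarrow> \<bar>real_of_int (fst x)\<bar> \<le> B \<and> \<bar>real_of_int (snd x)\<bar> \<le> B"
  shows "finite (S :: site set)"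
proof (rule finite_subset)
  show "S \<subseteq> {-\<lceil>B\<rceil>..\<lceil>B\<rceil>} \<times> {-\<lceil>B\<rceil>..\<lceil>B\<rceil>}"
  proof (rule subsetI, unfold mem_Times_iff)
    have "k \<in> {-\<lceil>B\<rceil>..\<lceil>B\<rceil>}" if "\<bar>real_of_int k\<bar> \<le> B" for k
      using that by (auto simp: abs_le_iff) linarith+
    then show "fst x \<in> {-\<lceil>B\<rceil>..\<lceil>B\<rceil>} \<and> snd x \<in> {-\<lceil>B\<rceil>..\<lceil>B\<rceil>}" if "x \<in> S" for x
      using assms[OF that] by blast
  qed
qed simp

lemma segment_finite:
  assumes "u \<in> S1"
  shows "finite {x. ip x u = 0 \<and> \<bar>ip x (perp u)\<bar> \<le> B}"
proof (rule bounded_sites_finite)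
  fix x assume "x \<in> {x. ip x u = 0 \<and> \<bar>ip x (perp u)\<bar> \<le> B}"
  then have x: "ip x u = 0" "\<bar>ip x (perp u)\<bar> \<le> B" by auto
  have "real_of_int (fst x) = - ip x (perp u) * snd u" "real_of_int (snd x) = ip x (perp u) * fst u"
    using coord_decomp[OF assms, of "real_site x"] x(1) by (simp_all add: ip_eq_dot real_site_def)
  moreover have "\<bar>ip x (perp u) * c\<bar> \<le> B" if "\<bar>c\<bar> \<le> 1" for c
    using x(2) that by (simp add: abs_mult mult_le_one order_trans[OF mult_left_mono])
  ultimately show "\<bar>real_of_int (fst x)\<bar> \<le> B \<and> \<bar>real_of_int (snd x)\<bar> \<le> B"
    using S1_coord_bound[OF assms] by (metis abs_minus_cancel mult_minus_left)
qed

(* The complement of A is invariant under translation by y. If every rule X contains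
   such a site y, then no site outside A can ever be infected, i.e. [A] = A. *)
definition compl_shift_closed :: "site \<Rightarrow> site set \<Rightarrow> bool" where
  "compl_shift_closed y A \<longleftrightarrow> (\<forall>x. x \<notin> A \<longrightarrow> sadd x y \<notin> A)"

lemma span_eq_if_compl_shift_closed:
  assumes "\<And>X. X \<in> U \<Longrightarrow> \<exists>y\<in>X. compl_shift_closed y A"
  shows "span U A = A"
proof -
  have "upd_step U A = A"
    using assms by (fastforce simp: upd_step_def compl_shift_closed_def)
  then have "(upd_step U ^^ t) A = A" for t by (induction t) auto
  then show ?thesis by (simp add: span_def)
qed

lemma compl_shift_closed_halfplane:
  "0 \<le> ip y w \<Longrightarrow> compl_shift_closed y (halfplane w a)"
  by (simp add: compl_shift_closed_def mem_halfplane ip_sadd)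

lemma compl_shift_closed_Un:
  "compl_shift_closed y A \<Longrightarrow> compl_shift_closed y B \<Longrightarrow> compl_shift_closed y (A \<union> B)"
  by (simp add: compl_shift_closed_def)

lemma compl_shift_closed_Int:
  "compl_shift_closed y A \<Longrightarrow> compl_shift_closed y B \<Longrightarrow> compl_shift_closed y (A \<inter> B)"
  by (auto simp: compl_shift_closed_def)

lemma site_norm_decomp:
  assumes "u \<in> S1"
  shows "real_of_int ((fst x)\<^sup>2 + (snd x)\<^sup>2) = (ip x u)\<^sup>2 + (ip x (perp u))\<^sup>2"
  using dot_decomp[OF assms, of "real_site x" "real_site x"]
  by (simp add: ip_eq_dot dot_def real_site_def power2_eq_square)

lemma site_eq_zero:
  assumes "u \<in> S1" "ip y u = 0" "ip y (perp u) = 0"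
  shows "y = (0,0)"
  using coord_decomp[OF assms(1), of "real_site y"] assms(2,3)
  by (cases y) (simp add: ip_eq_dot real_site_def)

(* Suppose some rule X points strictly into H_u or
   strictly backwards along the line <x,u> = 0. Then adding to H_u the finitely many line sites
   within distance M behind the origin infects all of ell_u^-: for x on ell_u^-, every site of
   x + X lies in H_u, in the added segment, or further back on ell_u^- (smaller norm), so
   induction on the norm applies. *)
lemma line_filled_by_bad_rule:
  assumes u: "u \<in> S1" and X: "X \<in> U" "finite X"
    and bad: "\<forall>y\<in>X. ip y u < 0 \<or> (ip y u = 0 \<and> ip y (perp u) < 0)"
    and M: "\<forall>y\<in>X. \<bar>ip y (perp u)\<bar> \<le> M"
  shows "ell_minus u \<subseteq>
    span U (halfplane u (0,0) \<union> {z. ip z u = 0 \<and> - M \<le> ip z (perp u) \<and> ip z (perp u) < 0})"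
    (is "_ \<subseteq> span U ?A")
proof
  fix x assume "x \<in> ell_minus u"
  then have "ip x u = 0" "0 \<le> ip x (perp u)" by (auto simp: ell_minus_eq)
  then show "x \<in> span U ?A"
  proof (induction "nat ((fst x)\<^sup>2 + (snd x)\<^sup>2)" arbitrary: x rule: less_induct)
    case less
    have "sadd x y \<in> span U ?A" if yX: "y \<in> X" for y
    proof (cases "ip y u < 0")
      case True
      then have "sadd x y \<in> ?A" using less.prems by (simp add: mem_halfplane ip_sadd)
      then show ?thesis by (rule subsetD[OF subset_span])
    next
      case False
      then have y: "ip y u = 0" "ip y (perp u) < 0" using bad yX by auto
      show ?thesis
      proof (cases "ip (sadd x y) (perp u) < 0")
        case True
        then have "sadd x y \<in> ?A"
          using y M yX less.prems by (auto simp: ip_sadd abs_le_iff)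
        then show ?thesis by (rule subsetD[OF subset_span])
      next
        case False
        have "(ip (sadd x y) (perp u))\<^sup>2 < (ip x (perp u))\<^sup>2"
          using False y less.prems by (intro power_strict_mono) (auto simp: ip_sadd)
        then have "real_of_int ((fst (sadd x y))\<^sup>2 + (snd (sadd x y))\<^sup>2)
            < real_of_int ((fst x)\<^sup>2 + (snd x)\<^sup>2)"
          using y less.prems unfolding site_norm_decomp[OF u] by (simp add: ip_sadd)
        then have "nat ((fst (sadd x y))\<^sup>2 + (snd (sadd x y))\<^sup>2) < nat ((fst x)\<^sup>2 + (snd x)\<^sup>2)"
          by (simp only: of_int_less_iff nat_less_eq_zless zero_le_power2 add_nonneg_nonneg)
        then show ?thesis using less.hyps False y less.prems by (simp add: ip_sadd)
      qed
    qed
    then show ?case using span_rule[OF X(2,1)] by blast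
  qed
qed

(* For a rational direction the line <x,u> = 0 contains a lattice site e != 0, and hence
   infinitely many sites n e of ell_u^-. *)
lemma rational_line_point:
  assumes "rational_dir u"
  shows "\<exists>e. ip e u = 0 \<and> 0 < ip e (perp u)"
proof -
  have u: "u \<in> S1" using assms by (simp add: rational_dir_def)
  obtain e where e0: "e \<noteq> (0,0)" and e: "ip e u = 0"
  proof (cases "fst u = 0")
    case True
    then show ?thesis using that[of "(1,0)"] by (simp add: ip_def)
  next
    case False
    then have "snd u / fst u \<in> \<rat>" using assms by (simp add: rational_dir_def)
    then obtain r s :: int where s: "s > 0" and q: "snd u / fst u = of_int r / of_int s"
      by (auto elim: Rats_cases')
    have "snd u * of_int s = fst u * of_int r" using q False s by (simp add: field_simps)
    then show ?thesis using that[of "(-r, s)"] s by (simp add: ip_def algebra_simps)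
  qed
  have "ip e (perp u) \<noteq> 0" using site_eq_zero[OF u e] e0 by blast
  have neg_ip: "ip (- fst e, - snd e) v = - ip e v" for v by (simp add: ip_def)
  show ?thesis
  proof (cases "0 < ip e (perp u)")
    case False
    then show ?thesis
      using e \<open>ip e (perp u) \<noteq> 0\<close> neg_ip by (intro exI[of _ "(- fst e, - snd e)"]) auto
  qed (use e in blast)
qed

lemma ell_minus_infinite:
  assumes "rational_dir u"
  shows "infinite (ell_minus u)"
proof -
  obtain e where e: "ip e u = 0" "0 < ip e (perp u)" using rational_line_point[OF assms] by blast
  define m where "m n = (int n * fst e, int n * snd e)" for n :: nat
  have ip_m: "ip (m n) v = real n * ip e v" for n v by (simp add: m_def ip_def algebra_simps)
  have "inj m"
  proof
    fix a b assume "m a = m b"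
    then have "real a * ip e (perp u) = real b * ip e (perp u)" using ip_m by metis
    then show "a = b" using e(2) by simp
  qed
  moreover have "range m \<subseteq> ell_minus u" using e by (auto simp: ell_minus_eq ip_m)
  ultimately show ?thesis by (meson finite_imageD finite_subset infinite_UNIV_nat)
qed

lemma rule_has_good_site:
  assumes U: "update_family U" and u: "rational_dir u"
    and alpha: "alpha_minus U u = \<infinity>" and X: "X \<in> U"
  shows "\<exists>y\<in>X. 0 < ip y u \<or> (ip y u = 0 \<and> 0 < ip y (perp u))"
proof (rule ccontr)
  assume none: "\<not> ?thesis"
  have u1: "u \<in> S1" using u by (simp add: rational_dir_def)
  have finX: "finite X" and X0: "(0,0) \<notin> X" using U X by (auto simp: update_family_def)
  have bad: "\<forall>y\<in>X. ip y u < 0 \<or> (ip y u = 0 \<and> ip y (perp u) < 0)"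
    using none X0 site_eq_zero[OF u1] by (metis linorder_neqE_linordered_idom)
  define M where "M = Max (insert 0 ((\<lambda>y. \<bar>ip y (perp u)\<bar>) ` X))"
  have M: "\<forall>y\<in>X. \<bar>ip y (perp u)\<bar> \<le> M" using finX by (simp add: M_def)
  define Z where "Z = {z. ip z u = 0 \<and> - M \<le> ip z (perp u) \<and> ip z (perp u) < 0}"
  have "finite Z"
    by (rule finite_subset[OF _ segment_finite[OF u1, of M]]) (auto simp: Z_def)
  moreover have "infinite (span U (halfplane u (0,0) \<union> Z) \<inter> ell_minus u)"
    using line_filled_by_bad_rule[OF u1 X finX bad M] ell_minus_infinite[OF u]
    by (simp add: Z_def Int_absorb1)
  ultimately have "alpha_minus U u \<le> enat (card Z)"
    unfolding alpha_minus_def by (intro INF_lower) auto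
  then show False using alpha by simp
qed

lemma uniform_slope_bound:
  fixes f g :: "'a \<Rightarrow> real"
  assumes "finite Y"
  shows "\<exists>k>0. \<forall>y\<in>Y. 0 < f y \<longrightarrow> k * \<bar>g y\<bar> \<le> f y"
proof -
  define K where "K = insert 1 ((\<lambda>y. f y / (\<bar>g y\<bar> + 1)) ` {y\<in>Y. 0 < f y})"
  have K: "finite K" "\<forall>q\<in>K. 0 < q" using assms by (auto simp: K_def add_pos_nonneg)
  define k where "k = Min K"
  have "k \<in> K" unfolding k_def using K(1) by (rule Min_in) (simp add: K_def)
  then have k: "0 < k" using K(2) by blast
  have "k * \<bar>g y\<bar> \<le> f y" if "y \<in> Y" "0 < f y" for y
  proof -
    have "k \<le> f y / (\<bar>g y\<bar> + 1)" unfolding k_def using K(1) that by (intro Min_le) (auto simp: K_def)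
    then have "k * (\<bar>g y\<bar> + 1) \<le> f y" by (simp add: pos_le_divide_eq add_pos_nonneg)
    then show ?thesis using k by (simp add: algebra_simps)
  qed
  then show ?thesis using k by blast
qed

(* The cone of directions whose angle with u lies between 0 and arctan k, on the side of perp u. *)
definition cone :: "dir \<Rightarrow> real \<Rightarrow> dir set" where
  "cone u k = {v. 0 \<le> dot v (perp u) \<and> dot v (perp u) \<le> k * dot v u}"

lemma cone_axis_nonneg:
  assumes "0 < k" "v \<in> cone u k"
  shows "0 \<le> dot v u"
proof -
  have "0 \<le> k * dot v u" using assms(2) by (auto simp: cone_def)
  then show ?thesis using assms(1) by (simp add: zero_le_mult_iff)
qed

lemma ip_nonneg_on_cone:
  assumes u: "u \<in> S1" and k: "0 < k" and w: "w \<in> cone u k"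
    and good: "(0 < ip y u \<and> k * \<bar>ip y (perp u)\<bar> \<le> ip y u) \<or> (ip y u = 0 \<and> 0 < ip y (perp u))"
  shows "0 \<le> ip y w"
proof -
  let ?F = "dot w u" and ?G = "dot w (perp u)"
  have ip: "ip y w = ip y u * ?F + ip y (perp u) * ?G"
    unfolding ip_eq_dot by (rule dot_decomp[OF u])
  have G: "0 \<le> ?G" "?G \<le> k * ?F" and F: "0 \<le> ?F"
    using w cone_axis_nonneg[OF k w] by (auto simp: cone_def)
  from good show ?thesis
  proof
    assume y: "0 < ip y u \<and> k * \<bar>ip y (perp u)\<bar> \<le> ip y u"
    have "- \<bar>ip y (perp u)\<bar> * ?G \<le> ip y (perp u) * ?G" using G by (intro mult_right_mono) auto
    moreover have "\<bar>ip y (perp u)\<bar> * ?G \<le> (k * \<bar>ip y (perp u)\<bar>) * ?F"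
      using mult_left_mono[OF G(2), of "\<bar>ip y (perp u)\<bar>"] by (simp add: algebra_simps)
    moreover have "(k * \<bar>ip y (perp u)\<bar>) * ?F \<le> ip y u * ?F" using y F by (intro mult_right_mono) auto
    ultimately show ?thesis unfolding ip by linarith
  next
    assume "ip y u = 0 \<and> 0 < ip y (perp u)"
    then show ?thesis using G by (simp add: ip)
  qed
qed

lemma rules_nonneg_on_cone:
  assumes U: "update_family U" and u: "rational_dir u" and alpha: "alpha_minus U u = \<infinity>"
  shows "\<exists>k>0. \<forall>X\<in>U. \<exists>y\<in>X. \<forall>w\<in>cone u k. 0 \<le> ip y w"
proof -
  have "finite (\<Union>U)" using U by (auto simp: update_family_def)
  then obtain k where k: "0 < k"
    and slope: "\<forall>y\<in>\<Union>U. 0 < ip y u \<longrightarrow> k * \<bar>ip y (perp u)\<bar> \<le> ip y u"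
    using uniform_slope_bound[of "\<Union>U" "\<lambda>y. ip y u" "\<lambda>y. ip y (perp u)"] by blast
  have u1: "u \<in> S1" using u by (simp add: rational_dir_def)
  have "\<exists>y\<in>X. \<forall>w\<in>cone u k. 0 \<le> ip y w" if X: "X \<in> U" for X
  proof -
    obtain y where y: "y \<in> X" "0 < ip y u \<or> (ip y u = 0 \<and> 0 < ip y (perp u))"
      using rule_has_good_site[OF U u alpha X] by blast
    then have "(0 < ip y u \<and> k * \<bar>ip y (perp u)\<bar> \<le> ip y u) \<or> (ip y u = 0 \<and> 0 < ip y (perp u))"
      using slope X by blast
    then show ?thesis using y(1) ip_nonneg_on_cone[OF u1 k] by blast
  qed
  then show ?thesis using k by blast
qed

lemma span_fixed_by_cone_rules:
  assumes "\<forall>X\<in>U. \<exists>y\<in>X. \<forall>w\<in>C. 0 \<le> ip y w"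
    and "\<And>y. \<forall>w\<in>C. 0 \<le> ip y w \<Longrightarrow> compl_shift_closed y A"
  shows "span U A = A"
  using assms by (intro span_eq_if_compl_shift_closed) blast

lemma cone_comb:
  assumes "v \<in> cone u k" "w \<in> cone u k" "0 \<le> s" "0 \<le> t"
  shows "comb s v t w \<in> cone u k"
proof -
  have "s * dot v (perp u) \<le> s * (k * dot v u)" "t * dot w (perp u) \<le> t * (k * dot w u)"
    using assms by (auto simp: cone_def intro: mult_left_mono)
  then show ?thesis using assms by (auto simp: cone_def dot_comb algebra_simps)
qed

lemma arc_subset_cone:
  assumes "v \<in> cone u k" "w \<in> cone u k"
  shows "arc v w \<subseteq> cone u k"
  using cone_comb[OF assms] by (auto simp: arc_eq)

lemma cone_mono:
  assumes "0 < k" "k \<le> k'"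
  shows "cone u k \<subseteq> cone u k'"
proof
  fix v assume v: "v \<in> cone u k"
  then have "k * dot v u \<le> k' * dot v u"
    using assms cone_axis_nonneg[OF assms(1) v] by (intro mult_right_mono) auto
  then show "v \<in> cone u k'" using v by (simp add: cone_def)
qed

lemma axis_in_cone: "u \<in> S1 \<Longrightarrow> 0 \<le> k \<Longrightarrow> u \<in> cone u k"
  by (simp add: cone_def dot_perp_self S1_iff_dot)

lemma cone_boundary:
  assumes u: "u \<in> S1" and k: "0 < k" and v: "v \<in> S1" "v \<in> cone u k"
    and G: "dot v (perp u) = 0"
  shows "v = u"
proof -
  have "(dot v u)\<^sup>2 = 1"
    using dot_decomp[OF u, of v v] v(1) G by (simp add: S1_iff_dot power2_eq_square)
  then have "dot v u = 1" using cone_axis_nonneg[OF k v(2)] by (simp add: power2_eq_1_iff)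
  then show ?thesis using coord_decomp[OF u, of v] G by (simp add: prod_eq_iff)
qed

lemma tilted_direction_exists:
  assumes u: "u \<in> S1" and e: "0 < e"
  shows "\<exists>u0\<in>S1. 0 < dot u0 (perp u) \<and> u0 \<in> cone u e"
proof -
  define c where "c = 1 / sqrt (1 + e\<^sup>2)"
  define u0 where "u0 = comb c u (e * c) (perp u)"
  have "0 < 1 + e\<^sup>2" by (simp add: add_pos_nonneg)
  then have c: "0 < c" "c\<^sup>2 * (1 + e\<^sup>2) = 1" by (simp_all add: c_def power_divide)
  have F: "dot u0 u = c" and G: "dot u0 (perp u) = e * c"
    using orthonormal_frame[OF u] by (simp_all add: u0_def dot_comb)
  have "dot u0 u0 = c * dot u0 u + (e * c) * dot u0 (perp u)"
    by (subst (1) u0_def) (simp only: dot_comb dot_commute[of u u0] dot_commute[of "perp u" u0])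
  also have "\<dots> = c\<^sup>2 * (1 + e\<^sup>2)" by (simp add: F G power2_eq_square algebra_simps)
  finally have "dot u0 u0 = c\<^sup>2 * (1 + e\<^sup>2)" .
  then have "u0 \<in> S1" using c by (simp add: S1_iff_dot)
  moreover have "u0 \<in> cone u e" using F G c e by (simp add: cone_def)
  moreover have "0 < dot u0 (perp u)" using G c e by simp
  ultimately show ?thesis by blast
qed

lemma ray_finite:
  assumes v: "v \<in> S1" and d: "0 < dot (perp v) w"
  shows "finite {x. ip x v = 0 \<and> 0 \<le> ip x (perp v) \<and> ip x w < K}"
proof (rule finite_subset[OF _ segment_finite[OF v, of "K / dot (perp v) w"]])
  show "{x. ip x v = 0 \<and> 0 \<le> ip x (perp v) \<and> ip x w < K}
      \<subseteq> {x. ip x v = 0 \<and> \<bar>ip x (perp v)\<bar> \<le> K / dot (perp v) w}"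
  proof safe
    fix x assume x: "ip x v = 0" "0 \<le> ip x (perp v)" "ip x w < K"
    have "ip x w = ip x (perp v) * dot (perp v) w"
      using dot_decomp[OF v, of "real_site x" w] x(1) by (simp add: ip_eq_dot dot_commute)
    then show "\<bar>ip x (perp v)\<bar> \<le> K / dot (perp v) w"
      using x d by (simp add: pos_le_divide_eq)
  qed
qed

lemma far_site:
  assumes "finite Z" "w \<noteq> (0,0)"
  shows "\<exists>a. \<forall>z\<in>Z. ip z w < ip a w"
proof -
  define M where "M = Max (insert 0 ((\<lambda>z. ip z w) ` Z))"
  have M: "\<forall>z\<in>Z. ip z w \<le> M" using assms(1) by (simp add: M_def)
  have pos: "0 < \<bar>fst w\<bar> + \<bar>snd w\<bar>" using assms(2) by (cases w) auto
  obtain n :: nat where n: "M < real n * (\<bar>fst w\<bar> + \<bar>snd w\<bar>)"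
    using pos ex_less_of_nat_mult by blast
  define s1 :: int where "s1 = (if fst w \<ge> 0 then 1 else -1)"
  define s2 :: int where "s2 = (if snd w \<ge> 0 then 1 else -1)"
  have "ip (int n * s1, int n * s2) w = real n * (\<bar>fst w\<bar> + \<bar>snd w\<bar>)"
    by (simp add: ip_def s1_def s2_def algebra_simps)
  then show ?thesis using M n by (intro exI[of _ "(int n * s1, int n * s2)"]) force
qed

(* Directions v strictly inside the half-cone also have alpha^-(v) = infinity: for finite Z,
   [H_v + Z] lies in the closed union of H_v and H_w(a), where w is the steepest cone direction, and
   ell_v^- leaves H_w(a) after finitely many sites because <perp v, w> > 0. *)
lemma alpha_infinite_in_cone:
  assumes rules: "\<forall>X\<in>U. \<exists>y\<in>X. \<forall>w\<in>cone u k. 0 \<le> ip y w"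
    and u: "u \<in> S1" and k: "0 < k"
    and v: "v \<in> S1" "v \<in> cone u (k/2)" and tilt: "0 < dot v (perp u)"
  shows "alpha_minus U v = \<infinity>"
proof -
  define w where "w = comb 1 u k (perp u)"
  have Fw: "dot w u = 1" and Gw: "dot w (perp u) = k"
    using orthonormal_frame[OF u] by (simp_all add: w_def dot_comb)
  have w_cone: "w \<in> cone u k" using Fw Gw k by (simp add: cone_def)
  have v_cone: "v \<in> cone u k" using v(2) cone_mono[of "k/2" k u] k by auto
  have w0: "w \<noteq> (0,0)" using Fw by (auto simp: dot_def)
  have "dot (perp v) w = k * dot v u - dot v (perp u)"
    unfolding dot_decomp[OF u, of "perp v" w] Fw Gw dot_perp_left[of v u] dot_perp_perp by simp
  then have steep: "0 < dot (perp v) w" using v(2) tilt by (simp add: cone_def)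
  have "finite (span U (halfplane v (0,0) \<union> Z) \<inter> ell_minus v)" if Z: "finite Z" for Z
  proof -
    obtain a where a: "\<forall>z\<in>Z. ip z w < ip a w" using far_site[OF Z w0] by blast
    let ?A = "halfplane v (0,0) \<union> halfplane w a"
    have "span U ?A = ?A" using v_cone w_cone
      by (intro span_fixed_by_cone_rules[OF rules] compl_shift_closed_Un compl_shift_closed_halfplane) auto
    moreover have "halfplane v (0,0) \<union> Z \<subseteq> ?A" using a by (auto simp: mem_halfplane)
    ultimately have "span U (halfplane v (0,0) \<union> Z) \<subseteq> ?A" using span_mono by metis
    then have "span U (halfplane v (0,0) \<union> Z) \<inter> ell_minus v
        \<subseteq> {x. ip x v = 0 \<and> 0 \<le> ip x (perp v) \<and> ip x w < ip a w}"
      by (auto simp: ell_minus_eq mem_halfplane)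
    then show ?thesis using ray_finite[OF v(1) steep] by (rule finite_subset)
  qed
  then have no_witness:
    "{Z. finite Z \<and> infinite (span U (halfplane v (0,0) \<union> Z) \<inter> ell_minus v)} = {}"
    by blast
  show ?thesis unfolding alpha_minus_def no_witness by (simp add: top_enat_def)
qed

lemma alpha_infinite_on_half_cone:
  assumes rules: "\<forall>X\<in>U. \<exists>y\<in>X. \<forall>w\<in>cone u k. 0 \<le> ip y w"
    and u: "u \<in> S1" and k: "0 < k" and alpha: "alpha_minus U u = \<infinity>"
    and v: "v \<in> S1" "v \<in> cone u (k/2)"
  shows "alpha_minus U v = \<infinity>"
proof (cases "dot v (perp u) = 0")
  case True
  then have "v = u" using cone_boundary[OF u _ v] k by simp
  then show ?thesis using alpha by simp
next
  case False
  then have "0 < dot v (perp u)" using v(2) by (simp add: cone_def)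
  then show ?thesis by (rule alpha_infinite_in_cone[OF rules u k v])
qed

theorem mainTheorem13:
  fixes U :: "site set set" and ustar :: dir
  assumes "update_family U"
    and "rational_dir ustar"
    and "ustar \<in> stable_set U"
    and "alpha_minus U ustar = \<infinity>"
  shows "\<exists>u0\<in>S1. u0 \<noteq> ustar \<and> u0 \<noteq> (- fst ustar, - snd ustar)
     \<and> arc u0 ustar \<subseteq> stable_set U
     \<and> (\<forall>u\<in>arc u0 ustar. rational_dir u \<longrightarrow> alpha_minus U u = \<infinity>)
     \<and> (\<forall>u\<in>arc u0 ustar. \<forall>a b.
          (halfplane u0 a \<inter> halfplane ustar b) - halfplane u (0,0) \<noteq> {} \<longrightarrow>
          span U (halfplane u (0,0) \<union> ((halfplane u0 a \<inter> halfplane ustar b) - halfplane u (0,0)))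
            = halfplane u (0,0) \<union> ((halfplane u0 a \<inter> halfplane ustar b) - halfplane u (0,0)))"
proof -
  have u: "ustar \<in> S1" using assms(2) by (simp add: rational_dir_def)
  obtain k where k: "0 < k" and rules: "\<forall>X\<in>U. \<exists>y\<in>X. \<forall>w\<in>cone ustar k. 0 \<le> ip y w"
    using rules_nonneg_on_cone[OF assms(1,2,4)] by blast
  obtain u0 where u0: "u0 \<in> S1" "0 < dot u0 (perp ustar)" "u0 \<in> cone ustar (k/2)"
    using tilted_direction_exists[OF u, of "k/2"] k by auto
  have arc_half: "arc u0 ustar \<subseteq> cone ustar (k/2)"
    using arc_subset_cone[OF u0(3) axis_in_cone[OF u]] k by simp
  have arc_cone: "arc u0 ustar \<subseteq> cone ustar k" and u0_cone: "u0 \<in> cone ustar k"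
    using arc_half u0(3) cone_mono[of "k/2" k ustar] k by auto
  have arc_S1: "arc u0 ustar \<subseteq> S1" by (auto simp: arc_def)
  have distinct: "u0 \<noteq> ustar" "u0 \<noteq> (- fst ustar, - snd ustar)"
    using u0(2) orthonormal_frame(2)[OF u] by (auto simp: dot_def)
  have stable: "arc u0 ustar \<subseteq> stable_set U"
  proof
    fix v assume v: "v \<in> arc u0 ustar"
    have "span U (halfplane v (0,0)) = halfplane v (0,0)" using v arc_cone
      by (intro span_fixed_by_cone_rules[OF rules] compl_shift_closed_halfplane) auto
    then show "v \<in> stable_set U" using v arc_S1 by (auto simp: stable_set_def)
  qed
  have alpha: "alpha_minus U v = \<infinity>" if "v \<in> arc u0 ustar" for v
    using alpha_infinite_on_half_cone[OF rules u k assms(4)] that arc_S1 arc_half by blast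
  \<comment> \<open>An iceberg united with H_v is H_v united with a sector.\<close>
  have iceberg: "span U (halfplane v (0,0) \<union> (halfplane u0 a \<inter> halfplane ustar b))
      = halfplane v (0,0) \<union> (halfplane u0 a \<inter> halfplane ustar b)" if "v \<in> arc u0 ustar" for v a b
    using that arc_cone u0_cone axis_in_cone[OF u, of k] k
    by (intro span_fixed_by_cone_rules[OF rules] compl_shift_closed_Un compl_shift_closed_Int
        compl_shift_closed_halfplane) auto
  show ?thesis
    unfolding Un_Diff_cancel using u0(1) distinct stable alpha iceberg by blast
qed

end
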